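(* Let $n,k,t$ be positive integers with $t\leq\frac{\log n}{2k}$, let $p\geq\frac{\log^3 n}{n}$, and fix $u\in\{1,\dots,n\}$. Let $\mathcal W$ be the set of walks $w=(w(0),w(1),\dots,w(k))$ of length $k$ in the complete graph (with self-loops) on $\{1,\dots,n\}$ with $w(0)=u$. For $\vec w=(w_1,\dots,w_{2t})\in\mathcal W^{2t}$, call $\vec w$ valid if every edge (unordered pair $\{a,b\}$, possibly $a=b$) traversed by the walks is traversed at least twice in total, counting multiplicity over all steps of all $2t$ walks, and let $|\vec w|$ be the number of distinct edges traversed. Let $\mathcal W^{2t}_{pair}$ be the set of valid $\vec w$. Then for every $\ell$, $$\big|\{\vec w\in\mathcal W^{2t}_{pair}:\ |\vec w|=\ell\}\big|\leq\binom{2tk}{2\ell}(2\ell-1)!!\cdot\ell^{2kt-2\ell}\,n^\ell.$$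
   Context: $(2\ell-1)!!=(2\ell-1)(2\ell-3)\cdots 1$. *)

theory Defs
  imports Complex_Main
begin

definition odd_dfact :: "nat \<Rightarrow> nat" where
  "odd_dfact l = (\<Prod>i\<in>{1..l}. 2 * i - 1)"

definition walks :: "nat \<Rightarrow> nat \<Rightarrow> nat \<Rightarrow> nat list set" where
  "walks n k u = {w. length w = k + 1 \<and> w ! 0 = u \<and> set w \<subseteq> {1..n}}"

definition step_edge :: "nat list \<Rightarrow> nat \<Rightarrow> nat set" where
  "step_edge w j = {w ! j, w ! Suc j}"

definition tuple_edges :: "nat \<Rightarrow> nat list list \<Rightarrow> nat set set" where
  "tuple_edges k ws = {step_edge (ws ! i) j | i j. i < length ws \<and> j < k}"

definition edge_mult :: "nat \<Rightarrow> nat list list \<Rightarrow> nat set \<Rightarrow> nat" where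
  "edge_mult k ws e = card {(i, j). i < length ws \<and> j < k \<and> step_edge (ws ! i) j = e}"

definition paired_tuples :: "nat \<Rightarrow> nat \<Rightarrow> nat \<Rightarrow> nat \<Rightarrow> nat list list set" where
  "paired_tuples n k t u = {ws. length ws = 2 * t \<and> (\<forall>w\<in>set ws. w \<in> walks n k u)
      \<and> (\<forall>e\<in>tuple_edges k ws. edge_mult k ws e \<ge> 2)}"

end

theory Submission
  imports Defs
begin

text \<open>Drop the common start vertex u of the 2t walks and concatenate them into a single
  sequence of 2tk vertices, keying each vertex by the edge through which it is entered. Scanning
  the sequence, a vertex either enters a new edge (at most n choices), or traverses for the second
  time one of the a edges seen once so far, or traverses again one of the b edges seen at least
  twice; since the key determines the vertex, the last two cases offer at most a and b choices.
  The resulting recursion is dominated by the closed form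
  binom(m, a + 2c) (a + 2c)! l^(m - a - 2c) n^c / (2^c c!), where m vertices remain and
  c = l - a - b edges are still to be introduced. At the start (a = b = 0, c = l, m = 2tk) this is
  the claimed bound, as (2l)! = 2^l l! (2l-1)!!.\<close>

definition key_list :: "('a list \<Rightarrow> 'a \<Rightarrow> 'k) \<Rightarrow> 'a list \<Rightarrow> 'k list" where
  "key_list \<kappa> xs = map (\<lambda>s. \<kappa> (take s xs) (xs ! s)) [0..<length xs]"

lemma key_list_Nil [simp]: "key_list \<kappa> [] = []"
  by (simp add: key_list_def)

lemma key_list_append:
  "key_list \<kappa> (xs @ ys) = key_list \<kappa> xs @ map (\<lambda>s. \<kappa> (xs @ take s ys) (ys ! s)) [0..<length ys]"
  by (rule nth_equalityI) (auto simp: key_list_def nth_append)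

lemma key_list_snoc: "key_list \<kappa> (xs @ [x]) = key_list \<kappa> xs @ [\<kappa> xs x]"
  by (simp add: key_list_append)

definition single_keys :: "'k list \<Rightarrow> 'k set" where
  "single_keys kl = {e \<in> set kl. count_list kl e = 1}"

definition repeated_keys :: "'k list \<Rightarrow> 'k set" where
  "repeated_keys kl = {e \<in> set kl. count_list kl e \<ge> 2}"

definition paired :: "nat \<Rightarrow> 'k list \<Rightarrow> bool" where
  "paired l kl \<longleftrightarrow> card (set kl) = l \<and> (\<forall>e\<in>set kl. count_list kl e \<ge> 2)"

lemma count_list_ge_1_if_in_set: "e \<in> set kl \<Longrightarrow> count_list kl e \<ge> 1"
  using count_list_0_iff[of kl e] by linarith

lemma set_eq_single_keys_Un_repeated_keys:
  "set kl = single_keys kl \<union> repeated_keys kl"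
proof (rule set_eqI)
  fix e
  show "e \<in> set kl \<longleftrightarrow> e \<in> single_keys kl \<union> repeated_keys kl"
    using count_list_ge_1_if_in_set[of e kl] by (auto simp: single_keys_def repeated_keys_def)
qed

lemma single_keys_Int_repeated_keys: "single_keys kl \<inter> repeated_keys kl = {}"
  by (auto simp: single_keys_def repeated_keys_def)

lemma finite_single_keys: "finite (single_keys kl)"
  and finite_repeated_keys: "finite (repeated_keys kl)"
  by (simp_all add: single_keys_def repeated_keys_def)

lemma card_set_eq_card_single_keys_add_card_repeated_keys:
  "card (set kl) = card (single_keys kl) + card (repeated_keys kl)"
  unfolding set_eq_single_keys_Un_repeated_keys[of kl]
  by (intro card_Un_disjoint finite_single_keys finite_repeated_keys single_keys_Int_repeated_keys)

lemma paired_iff_card_keys: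
  "paired l kl \<longleftrightarrow> card (single_keys kl) = 0 \<and> card (repeated_keys kl) = l"
proof -
  have "card (single_keys kl) = 0 \<longleftrightarrow> (\<forall>e\<in>set kl. count_list kl e \<noteq> 1)"
    using finite_single_keys[of kl] by (auto simp: single_keys_def)
  also have "\<dots> \<longleftrightarrow> (\<forall>e\<in>set kl. count_list kl e \<ge> 2)"
  proof (intro ball_cong refl)
    fix e
    assume "e \<in> set kl"
    then show "count_list kl e \<noteq> 1 \<longleftrightarrow> count_list kl e \<ge> 2"
      using count_list_ge_1_if_in_set[of e kl] by auto
  qed
  finally show ?thesis
    unfolding paired_def card_set_eq_card_single_keys_add_card_repeated_keys by auto
qed

lemma card_keys_snoc:
  "(card (single_keys (kl @ [e])), card (repeated_keys (kl @ [e]))) =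
     (if e \<in> single_keys kl then (card (single_keys kl) - 1, Suc (card (repeated_keys kl)))
      else if e \<in> repeated_keys kl then (card (single_keys kl), card (repeated_keys kl))
      else (Suc (card (single_keys kl)), card (repeated_keys kl)))"
proof -
  consider (single) "e \<in> single_keys kl" | (repeated) "e \<in> repeated_keys kl"
    | (new) "e \<notin> set kl"
    using set_eq_single_keys_Un_repeated_keys[of kl] by blast
  then show ?thesis
  proof cases
    case single
    then have "single_keys (kl @ [e]) = single_keys kl - {e}"
      "repeated_keys (kl @ [e]) = insert e (repeated_keys kl)"
      by (auto simp: single_keys_def repeated_keys_def)
    moreover have "e \<notin> repeated_keys kl"
      using single single_keys_Int_repeated_keys[of kl] by blast
    ultimately show ?thesis
      using single finite_single_keys[of kl] finite_repeated_keys[of kl] by simp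
  next
    case repeated
    then have "single_keys (kl @ [e]) = single_keys kl" "repeated_keys (kl @ [e]) = repeated_keys kl"
      by (auto simp: single_keys_def repeated_keys_def)
    moreover have "e \<notin> single_keys kl"
      using repeated single_keys_Int_repeated_keys[of kl] by blast
    ultimately show ?thesis
      using repeated by simp
  next
    case new
    then have "single_keys (kl @ [e]) = insert e (single_keys kl)"
      "repeated_keys (kl @ [e]) = repeated_keys kl"
      by (auto simp: single_keys_def repeated_keys_def)
    moreover have "e \<notin> single_keys kl" "e \<notin> repeated_keys kl"
      using new set_eq_single_keys_Un_repeated_keys[of kl] by blast+
    ultimately show ?thesis
      using finite_single_keys[of kl] by simp
  qed
qed

fun pairing_count :: "nat \<Rightarrow> nat \<Rightarrow> nat \<Rightarrow> nat \<Rightarrow> nat \<Rightarrow> nat" where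
  "pairing_count n l 0 a b = (if a = 0 \<and> b = l then 1 else 0)"
| "pairing_count n l (Suc m) a b =
     n * pairing_count n l m (Suc a) b + a * pairing_count n l m (a - 1) (Suc b)
     + b * pairing_count n l m a b"

lemma pairing_count_eq_0: "l < a + b \<Longrightarrow> pairing_count n l m a b = 0"
  by (induction m arbitrary: a b) auto

lemma sum_le_by_classes:
  fixes f :: "'a \<Rightarrow> nat"
  assumes "finite V" "card V \<le> n" "inj_on g V" "finite A" "finite B"
    and "\<And>x. x \<in> V \<Longrightarrow> f x \<le> (if g x \<in> A then \<alpha> else if g x \<in> B then \<beta> else \<gamma>)"
  shows "(\<Sum>x\<in>V. f x) \<le> card A * \<alpha> + card B * \<beta> + n * \<gamma>"
proof -
  define VA where "VA = {x \<in> V. g x \<in> A}"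
  define VB where "VB = {x \<in> V. g x \<notin> A \<and> g x \<in> B}"
  define VC where "VC = {x \<in> V. g x \<notin> A \<and> g x \<notin> B}"
  have "(\<Sum>x\<in>V. f x) \<le> (\<Sum>x\<in>V. if g x \<in> A then \<alpha> else if g x \<in> B then \<beta> else \<gamma>)"
    using assms(6) by (rule sum_mono)
  also have "\<dots> = (\<Sum>x\<in>V. (if x \<in> VA then \<alpha> else 0) + (if x \<in> VB then \<beta> else 0)
      + (if x \<in> VC then \<gamma> else 0))"
    by (rule sum.cong) (auto simp: VA_def VB_def VC_def)
  also have "\<dots> = card VA * \<alpha> + card VB * \<beta> + card VC * \<gamma>"
  proof -
    have "(\<Sum>x\<in>V. if x \<in> S then c else 0) = card S * c" if "S \<subseteq> V" for S and c :: nat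
      using \<open>finite V\<close> that by (simp add: sum.If_cases Int_absorb1)
    moreover have "VA \<subseteq> V" "VB \<subseteq> V" "VC \<subseteq> V"
      by (auto simp: VA_def VB_def VC_def)
    ultimately show ?thesis
      by (simp add: sum.distrib)
  qed
  also have "\<dots> \<le> card A * \<alpha> + card B * \<beta> + n * \<gamma>"
  proof -
    have "card VA \<le> card A"
      unfolding VA_def using assms(3,4) by (intro card_inj_on_le) (auto intro: inj_on_subset)
    moreover have "card VB \<le> card B"
      unfolding VB_def using assms(3,5) by (intro card_inj_on_le) (auto intro: inj_on_subset)
    moreover have "card VC \<le> card V"
      unfolding VC_def using assms(1) by (intro card_mono) auto
    ultimately show ?thesis
      using assms(2) by (intro add_mono mult_le_mono1) simp_all
  qed
  finally show ?thesis .
qed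

definition completions :: "'a set \<Rightarrow> ('a list \<Rightarrow> 'a \<Rightarrow> 'k) \<Rightarrow> nat \<Rightarrow> 'a list \<Rightarrow> nat \<Rightarrow> 'a list set" where
  "completions V \<kappa> l ys m = {zs. length zs = m \<and> set zs \<subseteq> V \<and> paired l (key_list \<kappa> (ys @ zs))}"

lemma finite_completions: "finite V \<Longrightarrow> finite (completions V \<kappa> l ys m)"
  unfolding completions_def
  by (rule finite_subset[OF _ finite_lists_length_eq[of V m]]) auto

lemma completions_0: "completions V \<kappa> l ys 0 = (if paired l (key_list \<kappa> ys) then {[]} else {})"
  by (auto simp: completions_def)

lemma completions_Suc:
  "completions V \<kappa> l ys (Suc m) = (\<Union>x\<in>V. (#) x ` completions V \<kappa> l (ys @ [x]) m)"
proof (intro equalityI subsetI)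
  fix zs
  assume zs: "zs \<in> completions V \<kappa> l ys (Suc m)"
  then obtain x zs' where "zs = x # zs'"
    by (cases zs) (auto simp: completions_def)
  with zs show "zs \<in> (\<Union>x\<in>V. (#) x ` completions V \<kappa> l (ys @ [x]) m)"
    by (auto simp: completions_def)
qed (auto simp: completions_def)

lemma card_completions_le_pairing_count:
  assumes "finite V" "card V \<le> n" "\<And>ys. inj_on (\<kappa> ys) V"
  shows "card (completions V \<kappa> l ys m)
    \<le> pairing_count n l m (card (single_keys (key_list \<kappa> ys))) (card (repeated_keys (key_list \<kappa> ys)))"
proof (induction m arbitrary: ys)
  case 0
  then show ?case by (simp add: completions_0 paired_iff_card_keys)
next
  case (Suc m)
  define kl where "kl = key_list \<kappa> ys"
  let ?a = "card (single_keys kl)"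
  let ?b = "card (repeated_keys kl)"
  let ?P = "pairing_count n l m"
  have "card (completions V \<kappa> l ys (Suc m))
      \<le> (\<Sum>x\<in>V. card ((#) x ` completions V \<kappa> l (ys @ [x]) m))"
    unfolding completions_Suc using \<open>finite V\<close> by (rule card_UN_le)
  also have "\<dots> \<le> (\<Sum>x\<in>V. card (completions V \<kappa> l (ys @ [x]) m))"
    by (intro sum_mono card_image_le finite_completions \<open>finite V\<close>)
  also have "\<dots> \<le> ?a * ?P (?a - 1) (Suc ?b) + ?b * ?P ?a ?b + n * ?P (Suc ?a) ?b"
  proof (rule sum_le_by_classes[OF assms finite_single_keys finite_repeated_keys])
    fix x
    show "card (completions V \<kappa> l (ys @ [x]) m) \<le>
      (if \<kappa> ys x \<in> single_keys kl then ?P (?a - 1) (Suc ?b)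
       else if \<kappa> ys x \<in> repeated_keys kl then ?P ?a ?b else ?P (Suc ?a) ?b)"
      using Suc.IH[of "ys @ [x]"] card_keys_snoc[of kl "\<kappa> ys x"]
      by (simp add: key_list_snoc kl_def split: if_splits)
  qed
  finally show ?case
    by (simp add: kl_def algebra_simps)
qed

definition placements :: "nat \<Rightarrow> nat \<Rightarrow> nat \<Rightarrow> real" where
  "placements l m j = real (m choose j) * fact j * real l ^ (m - j)"

lemma placements_Suc:
  "placements l (Suc m) j = real j * placements l m (j - 1) + real l * placements l m j"
proof (cases j)
  case (Suc i)
  have "real l * placements l m (Suc i) = real (m choose Suc i) * fact (Suc i) * real l ^ (m - i)"
  proof (cases "Suc i \<le> m")
    case True
    then have "m - i = Suc (m - Suc i)"
      by simp
    then show ?thesis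
      by (simp add: placements_def algebra_simps)
  qed (simp add: placements_def binomial_eq_0)
  then show ?thesis
    using Suc by (simp add: placements_def algebra_simps)
qed (simp add: placements_def)

definition pairing_weight :: "nat \<Rightarrow> nat \<Rightarrow> real" where
  "pairing_weight n c = real n ^ c / (2 ^ c * fact c)"

lemma pairing_weight_Suc: "real n * pairing_weight n c = 2 * real (Suc c) * pairing_weight n (Suc c)"
  by (simp add: pairing_weight_def del: of_nat_Suc)

definition pairing_bound :: "nat \<Rightarrow> nat \<Rightarrow> nat \<Rightarrow> nat \<Rightarrow> nat \<Rightarrow> real" where
  "pairing_bound n l m a c = placements l m (a + 2 * c) * pairing_weight n c"

lemma pairing_bound_nonneg: "pairing_bound n l m a c \<ge> 0"
  by (simp add: pairing_bound_def placements_def pairing_weight_def)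

lemma pairing_bound_Suc:
  "pairing_bound n l (Suc m) a c =
     (if c > 0 then real n * pairing_bound n l m (Suc a) (c - 1) else 0)
     + real a * pairing_bound n l m (a - 1) c + real l * pairing_bound n l m a c"
proof -
  define j where "j = a + 2 * c"
  let ?P = "placements l m" and ?W = "pairing_weight n c"
  have new_key: "(if c > 0 then real n * pairing_bound n l m (Suc a) (c - 1) else 0)
      = 2 * real c * ?P (j - 1) * ?W"
  proof (cases c)
    case (Suc c')
    then have "Suc a + 2 * (c - 1) = j - 1"
      by (simp add: j_def)
    then show ?thesis
      using pairing_weight_Suc[of n c'] Suc by (simp add: pairing_bound_def)
  qed simp
  have single_key: "real a * pairing_bound n l m (a - 1) c = real a * ?P (j - 1) * ?W"
    by (cases a) (simp_all add: pairing_bound_def j_def)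
  have "pairing_bound n l (Suc m) a c = (real j * ?P (j - 1) + real l * ?P j) * ?W"
    by (simp add: pairing_bound_def placements_Suc j_def)
  also have "real j = 2 * real c + real a"
    by (simp add: j_def)
  finally show ?thesis
    unfolding new_key single_key by (simp add: pairing_bound_def j_def algebra_simps)
qed

lemma pairing_count_le_pairing_bound:
  "a + b \<le> l \<Longrightarrow> real (pairing_count n l m a b) \<le> pairing_bound n l m a (l - a - b)"
proof (induction m arbitrary: a b)
  case 0
  then show ?case
    using pairing_bound_nonneg by (simp add: pairing_bound_def placements_def pairing_weight_def)
next
  case (Suc m)
  define c where "c = l - a - b"
  have new_key: "real n * pairing_count n l m (Suc a) b
      \<le> (if c > 0 then real n * pairing_bound n l m (Suc a) (c - 1) else 0)"
  proof (cases "c > 0")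
    case True
    then have "Suc a + b \<le> l" "l - Suc a - b = c - 1"
      using Suc.prems by (auto simp: c_def)
    with True show ?thesis
      using Suc.IH[of "Suc a" b] by (simp add: mult_left_mono)
  next
    case False
    then show ?thesis
      using Suc.prems pairing_count_eq_0[of l "Suc a" b] by (simp add: c_def)
  qed
  have single_key: "real a * pairing_count n l m (a - 1) (Suc b) \<le> real a * pairing_bound n l m (a - 1) c"
  proof (cases a)
    case (Suc a')
    then have "a - 1 + Suc b \<le> l" "l - (a - 1) - Suc b = c"
      using Suc.prems by (auto simp: c_def)
    then show ?thesis
      using Suc.IH[of "a - 1" "Suc b"] by (simp add: mult_left_mono)
  qed simp
  have repeated_key: "real b * pairing_count n l m a b \<le> real l * pairing_bound n l m a c"
    using Suc.IH[of a b] Suc.prems pairing_bound_nonneg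
    by (intro mult_mono) (simp_all add: c_def)
  show ?case
    unfolding c_def[symmetric] pairing_count.simps of_nat_add of_nat_mult pairing_bound_Suc
    using new_key single_key repeated_key by linarith
qed

lemma fact_double_eq_odd_dfact: "fact (2 * l) = (2 ^ l * fact l * odd_dfact l :: nat)"
proof (induction l)
  case 0
  then show ?case by (simp add: odd_dfact_def)
next
  case (Suc l)
  have "odd_dfact (Suc l) = (2 * l + 1) * odd_dfact l"
    by (simp add: odd_dfact_def prod.nat_ivl_Suc')
  moreover have "fact (2 * Suc l) = (2 * l + 2) * ((2 * l + 1) * (fact (2 * l) :: nat))"
    by (simp add: algebra_simps)
  ultimately show ?case
    using Suc by (simp add: algebra_simps)
qed

lemma pairing_bound_0:
  "pairing_bound n l m 0 l = real ((m choose (2 * l)) * odd_dfact l * l ^ (m - 2 * l) * n ^ l)"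
proof -
  have "(fact (2 * l) :: real) = 2 ^ l * fact l * real (odd_dfact l)"
    using arg_cong[OF fact_double_eq_odd_dfact[of l], of real] by (simp add: of_nat_fact)
  then show ?thesis
    by (simp add: pairing_bound_def placements_def pairing_weight_def)
qed

text \<open>A vertex at a position divisible by k starts a new walk and is entered from u.\<close>

definition walk_key :: "nat \<Rightarrow> nat \<Rightarrow> nat list \<Rightarrow> nat \<Rightarrow> nat set" where
  "walk_key k u ys x = {if length ys mod k = 0 then u else last ys, x}"

definition walk_edges :: "nat \<Rightarrow> nat list \<Rightarrow> nat set list" where
  "walk_edges k w = map (step_edge w) [0..<k]"

lemma inj_on_walk_key: "inj_on (walk_key k u ys) V"
  by (auto simp: inj_on_def walk_key_def doubleton_eq_iff)

lemma walk_eq_Cons_tl: "w \<in> walks n k u \<Longrightarrow> w = u # tl w"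
  by (cases w) (auto simp: walks_def)

lemma length_concat_map_tl:
  "\<forall>w\<in>set ws. w \<in> walks n k u \<Longrightarrow> length (concat (map tl ws)) = length ws * k"
  by (induction ws) (auto simp: walks_def)

lemma key_list_walk_key_concat_map_tl:
  assumes "\<forall>w\<in>set ws. w \<in> walks n k u"
  shows "key_list (walk_key k u) (concat (map tl ws)) = concat (map (walk_edges k) ws)"
  using assms
proof (induction ws rule: rev_induct)
  case (snoc w ws)
  define xs where "xs = concat (map tl ws)"
  have w: "w \<in> walks n k u" and ws: "\<forall>w\<in>set ws. w \<in> walks n k u"
    using snoc.prems by auto
  have "walk_key k u (xs @ take s (tl w)) (tl w ! s) = step_edge w s" if "s < k" for s
  proof -
    have "length (xs @ take s (tl w)) mod k = s"
      using that w length_concat_map_tl[OF ws] by (simp add: xs_def walks_def)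
    moreover have "tl w ! s = w ! Suc s"
      using that w by (simp add: nth_tl walks_def)
    moreover have "last (xs @ take s (tl w)) = w ! s" if "s > 0"
    proof -
      obtain s' where "s = Suc s'"
        using \<open>s > 0\<close> gr0_conv_Suc by blast
      then show ?thesis
        using \<open>s < k\<close> w by (simp add: take_Suc_conv_app_nth nth_tl walks_def)
    qed
    ultimately show ?thesis
      using w by (cases "s = 0") (auto simp: walk_key_def step_edge_def walks_def)
  qed
  moreover have "length (tl w) = k"
    using w by (simp add: walks_def)
  ultimately show ?case
    using snoc.IH[OF ws] by (simp add: key_list_append walk_edges_def xs_def)
qed simp

lemma tuple_edges_eq_set_walk_edges:
  "tuple_edges k ws = set (concat (map (walk_edges k) ws))"
proof (intro equalityI subsetI)
  fix e
  assume "e \<in> tuple_edges k ws"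
  then obtain i j where "i < length ws" "j < k" "e = step_edge (ws ! i) j"
    by (auto simp: tuple_edges_def)
  then show "e \<in> set (concat (map (walk_edges k) ws))"
    by (auto simp: walk_edges_def intro!: bexI[of _ "ws ! i"])
next
  fix e
  assume "e \<in> set (concat (map (walk_edges k) ws))"
  then obtain w j where "w \<in> set ws" "j < k" "e = step_edge w j"
    by (auto simp: walk_edges_def)
  then obtain i where "i < length ws" "w = ws ! i"
    by (auto simp: in_set_conv_nth)
  with \<open>j < k\<close> \<open>e = step_edge w j\<close> show "e \<in> tuple_edges k ws"
    by (auto simp: tuple_edges_def)
qed

lemma count_list_walk_edges: "count_list (walk_edges k w) e = card {j. j < k \<and> step_edge w j = e}"
proof -
  have "count_list (walk_edges k w) e = card {j. j < k \<and> e = map (step_edge w) [0..<k] ! j}"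
    unfolding walk_edges_def count_list_eq_length_filter length_filter_conv_card by simp
  also have "{j. j < k \<and> e = map (step_edge w) [0..<k] ! j} = {j. j < k \<and> step_edge w j = e}"
    by auto
  finally show ?thesis .
qed

lemma edge_mult_eq_count_list:
  "edge_mult k ws e = count_list (concat (map (walk_edges k) ws)) e"
proof (induction ws rule: rev_induct)
  case Nil
  then show ?case by (simp add: edge_mult_def)
next
  case (snoc w ws)
  let ?S = "\<lambda>ws. {(i, j). i < length ws \<and> j < k \<and> step_edge (ws ! i) j = e}"
  let ?J = "{j. j < k \<and> step_edge w j = e}"
  have split: "?S (ws @ [w]) = ?S ws \<union> Pair (length ws) ` ?J"
    by (auto simp: nth_append less_Suc_eq)
  have "finite (?S ws)"
    by (rule finite_subset[of _ "{..<length ws} \<times> {..<k}"]) auto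
  then have "card (?S (ws @ [w])) = card (?S ws) + card (Pair (length ws) ` ?J)"
    unfolding split by (intro card_Un_disjoint) auto
  also have "card (Pair (length ws) ` ?J) = card ?J"
    by (simp add: card_image inj_on_def)
  finally have "card (?S (ws @ [w])) = card (?S ws) + card ?J" .
  then show ?case
    using snoc.IH by (simp add: edge_mult_def count_list_walk_edges)
qed

lemma paired_key_list_walk_key_iff:
  assumes "\<forall>w\<in>set ws. w \<in> walks n k u"
  shows "paired l (key_list (walk_key k u) (concat (map tl ws)))
    \<longleftrightarrow> card (tuple_edges k ws) = l \<and> (\<forall>e\<in>tuple_edges k ws. edge_mult k ws e \<ge> 2)"
  by (simp add: paired_def key_list_walk_key_concat_map_tl[OF assms]
      tuple_edges_eq_set_walk_edges edge_mult_eq_count_list)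

lemma inj_on_concat_map_tl:
  "inj_on (\<lambda>ws. concat (map tl ws)) {ws. length ws = N \<and> (\<forall>w\<in>set ws. w \<in> walks n k u)}"
proof (rule inj_onI)
  fix ws ws'
  assume ws: "ws \<in> {ws. length ws = N \<and> (\<forall>w\<in>set ws. w \<in> walks n k u)}"
    and ws': "ws' \<in> {ws. length ws = N \<and> (\<forall>w\<in>set ws. w \<in> walks n k u)}"
    and eq: "concat (map tl ws) = concat (map tl ws')"
  have "length x = k" if "x \<in> set (map tl ws) \<union> set (map tl ws')" for x
    using that ws ws' by (auto simp: walks_def)
  then have "length x = length y" if "(x, y) \<in> set (zip (map tl ws) (map tl ws'))" for x y
    using set_zip_leftD[OF that] set_zip_rightD[OF that] by auto
  then have "map tl ws = map tl ws'"
    using ws ws' by (intro concat_injective[OF eq]) auto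
  then have "map (Cons u) (map tl ws) = map (Cons u) (map tl ws')"
    by simp
  moreover have "map (Cons u) (map tl vs) = vs" if "\<forall>w\<in>set vs. w \<in> walks n k u" for vs
    using that by (induction vs) (auto simp flip: walk_eq_Cons_tl)
  ultimately show "ws = ws'"
    using ws ws' by simp
qed

lemma concat_map_tl_mem_completions:
  assumes "ws \<in> paired_tuples n k t u" and "card (tuple_edges k ws) = l"
  shows "concat (map tl ws) \<in> completions {1..n} (walk_key k u) l [] (2 * t * k)"
proof -
  have walks: "\<forall>w\<in>set ws. w \<in> walks n k u"
    using assms(1) by (simp add: paired_tuples_def)
  have "set (tl w) \<subseteq> {1..n}" if "w \<in> set ws" for w
  proof -
    have "set w \<subseteq> {1..n}"
      using walks that by (simp add: walks_def)
    then show ?thesis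
      by (cases w) auto
  qed
  then have "set (concat (map tl ws)) \<subseteq> {1..n}"
    by auto
  then show ?thesis
    using assms walks
    by (simp add: completions_def paired_tuples_def length_concat_map_tl
        paired_key_list_walk_key_iff)
qed

theorem proposition10:
  fixes n k t u l :: nat and p :: real
  assumes "n > 0" "k > 0" "t > 0"
    and "real t \<le> ln (real n) / (2 * real k)"
    and "p \<ge> (ln (real n)) ^ 3 / real n"
    and "u \<in> {1..n}"
  shows "card {ws \<in> paired_tuples n k t u. card (tuple_edges k ws) = l}
           \<le> ((2 * t * k) choose (2 * l)) * odd_dfact l * l ^ (2 * k * t - 2 * l) * n ^ l"
proof -
  let ?T = "{ws \<in> paired_tuples n k t u. card (tuple_edges k ws) = l}"
  let ?C = "completions {1..n} (walk_key k u) l [] (2 * t * k)"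
  have "card ?T \<le> card ?C"
  proof (rule card_inj_on_le)
    show "inj_on (\<lambda>ws. concat (map tl ws)) ?T"
      by (rule inj_on_subset[OF inj_on_concat_map_tl]) (auto simp: paired_tuples_def)
    show "(\<lambda>ws. concat (map tl ws)) ` ?T \<subseteq> ?C"
      using concat_map_tl_mem_completions by blast
  qed (simp add: finite_completions)
  also have "card ?C \<le> pairing_count n l (2 * t * k) 0 0"
    using card_completions_le_pairing_count[of "{1..n}" n "walk_key k u" l "[]" "2 * t * k"]
    by (simp add: inj_on_walk_key single_keys_def repeated_keys_def)
  finally have "real (card ?T) \<le> pairing_bound n l (2 * t * k) 0 l"
    using pairing_count_le_pairing_bound[of 0 0 l n "2 * t * k"] by simp
  also have "\<dots> = real (((2 * t * k) choose (2 * l)) * odd_dfact l * l ^ (2 * t * k - 2 * l) * n ^ l)"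
    by (rule pairing_bound_0)
  finally show ?thesis
    by (simp only: of_nat_le_iff mult.commute[of k t] mult.assoc)
qed

end
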